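(* Let $d$ be a Hardy type series derivation on $\mathbb{K}$. Let $\alpha\in\Gamma$ with $\alpha\neq\hat\theta$ (this condition being vacuous if $\hat\theta$ does not exist). Then there exists a unique fundamental monomial $\psi_\alpha\in\Phi$ such that $\mathrm{LF}\big(\alpha/\theta^{(\psi_\alpha)}\big)=\psi_\alpha$.
   Context: Let $(\Phi,\preccurlyeq)$ be a totally ordered set; $\mathbf{H}(\Phi)$ is the group of formal products $\gamma=\prod_{\phi}\phi^{\gamma_\phi}$, $\gamma_\phi\in\mathbb{R}$, with anti-well-ordered support $\operatorname{supp}\gamma=\{\phi:\gamma_\phi\neq0\}$, pointwise multiplication and anti-lexicographic order ($\gamma\succ1$ iff the exponent of $\max\operatorname{supp}\gamma$ is positive); $\Phi\subseteq\mathbf H(\Phi)$ via $\phi=\phi^1$ (fundamental monomials). Fix a subgroup $\Gamma\supseteq\Phi$. $\mathrm{LF}(\gamma)=\max\operatorname{supp}\gamma$ for $\gamma\ne1$, $\mathrm{LF}(1)=1$. $\mathbb{K}=\mathbb{R}((\Gamma))$: formal series with anti-well-ordered support in $\Gamma$; $\mathrm{LM}(a)$ = largest monomial of the support; $a\preccurlyeq b$ iff $\mathrm{LM}(a)\preccurlyeq\mathrm{LM}(b)$, $a\asymp b$ iff equal leading monomials; $|a|=\max(\mathrm{LM}(a),\mathrm{LM}(a)^{-1})$; $a,b\succ 1$ comparable iff $\mathrm{LF}(\mathrm{LM}(a))=\mathrm{LF}(\mathrm{LM}(b))$. Summable families: union of supports anti-well-ordered, each monomial in finitely many supports. A series derivation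 is a map $a\mapsto a'$ on $\mathbb{K}$ with $1'=0$, $\alpha'=\alpha\sum_{\phi\in\operatorname{supp}\alpha}\alpha_\phi\phi'/\phi$ for $\alpha=\prod\phi^{\alpha_\phi}\in\Gamma$, and $a'=\sum a_\alpha\alpha'$ (summable families). Hardy type: (HD1) constants are exactly $\mathbb{R}$; (HD2) for $a,b\in\mathbb{K}^*$, $a,b\not\asymp 1$: $a\preccurlyeq b\iff a'\preccurlyeq b'$; (HD3) for $|a|\succ|b|\succ1$: $a'/a\succcurlyeq b'/b$, with $\asymp$ iff $a,b$ comparable. $\theta^{(\phi)}=\mathrm{LM}(\phi'/\phi)$ for $\phi\in\Phi$; $\hat\theta$ is the greatest lower bound of $\{\theta^{(\phi)}:\phi\in\Phi\}$ in $(\Gamma,\preccurlyeq)$ if it exists. *)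

theory Defs
  imports Complex_Main
begin

text \<open>A monomial gamma = prod phi^(gamma_phi) in H(Phi) is represented by its exponent
 function 'a => real; the group H(Phi) is written additively on exponents:
 product = pointwise sum, 1 = constant 0, inverse = negation.
 A series in R((Gamma)) is a function from monomials to real coefficients.\<close>

type_synonym 'a mono = "'a \<Rightarrow> real"
type_synonym 'a ser = "'a mono \<Rightarrow> real"

definition antiwo :: "('b \<Rightarrow> 'b \<Rightarrow> bool) \<Rightarrow> 'b set \<Rightarrow> bool" where
  "antiwo le S \<longleftrightarrow> (\<forall>T. T \<subseteq> S \<longrightarrow> T \<noteq> {} \<longrightarrow> (\<exists>m\<in>T. \<forall>t\<in>T. le t m))"

definition msupp :: "'a mono \<Rightarrow> 'a set" where
  "msupp \<gamma> = {x. \<gamma> x \<noteq> 0}"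

definition hahn :: "'a::linorder set \<Rightarrow> 'a mono set" where
  "hahn Phi = {\<gamma>. msupp \<gamma> \<subseteq> Phi \<and> antiwo (\<le>) (msupp \<gamma>)}"

definition mone :: "'a mono" where "mone = (\<lambda>_. 0)"
definition mmul :: "'a mono \<Rightarrow> 'a mono \<Rightarrow> 'a mono" where "mmul \<gamma> \<delta> = (\<lambda>x. \<gamma> x + \<delta> x)"
definition minv :: "'a mono \<Rightarrow> 'a mono" where "minv \<gamma> = (\<lambda>x. - \<gamma> x)"
definition mdiv :: "'a mono \<Rightarrow> 'a mono \<Rightarrow> 'a mono" where "mdiv \<gamma> \<delta> = mmul \<gamma> (minv \<delta>)"

definition fund :: "'a \<Rightarrow> 'a mono" where
  "fund \<phi> = (\<lambda>x. if x = \<phi> then 1 else 0)"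

definition maxsupp :: "'a::linorder mono \<Rightarrow> 'a" where
  "maxsupp \<gamma> = (GREATEST x. \<gamma> x \<noteq> 0)"

definition LF :: "'a::linorder mono \<Rightarrow> 'a mono" where
  "LF \<gamma> = (if \<gamma> = mone then mone else fund (maxsupp \<gamma>))"

definition mpos :: "'a::linorder mono \<Rightarrow> bool" where
  "mpos \<gamma> \<longleftrightarrow> \<gamma> \<noteq> mone \<and> \<gamma> (maxsupp \<gamma>) > 0"

definition mless :: "'a::linorder mono \<Rightarrow> 'a mono \<Rightarrow> bool" where
  "mless \<gamma> \<delta> \<longleftrightarrow> mpos (mdiv \<delta> \<gamma>)"

definition mle :: "'a::linorder mono \<Rightarrow> 'a mono \<Rightarrow> bool" where
  "mle \<gamma> \<delta> \<longleftrightarrow> \<gamma> = \<delta> \<or> mless \<gamma> \<delta>"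

definition absm :: "'a::linorder mono \<Rightarrow> 'a mono" where
  "absm \<gamma> = (if mle mone \<gamma> then \<gamma> else minv \<gamma>)"

definition value_group :: "'a::linorder set \<Rightarrow> 'a mono set \<Rightarrow> bool" where
  "value_group Phi G \<longleftrightarrow> G \<subseteq> hahn Phi \<and> mone \<in> G \<and>
     (\<forall>x\<in>G. \<forall>y\<in>G. mmul x y \<in> G) \<and> (\<forall>x\<in>G. minv x \<in> G) \<and> fund ` Phi \<subseteq> G"

definition ssupp :: "'a ser \<Rightarrow> 'a mono set" where
  "ssupp a = {m. a m \<noteq> 0}"

definition Kser :: "'a::linorder mono set \<Rightarrow> 'a ser set" where
  "Kser G = {a. ssupp a \<subseteq> G \<and> antiwo mle (ssupp a)}"

definition LM :: "'a::linorder ser \<Rightarrow> 'a mono" where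
  "LM a = (THE m. a m \<noteq> 0 \<and> (\<forall>n. a n \<noteq> 0 \<longrightarrow> mle n m))"

definition smon :: "'a mono \<Rightarrow> 'a ser" where
  "smon \<gamma> = (\<lambda>m. if m = \<gamma> then 1 else 0)"
definition sone :: "'a ser" where "sone = smon mone"
definition szero :: "'a ser" where "szero = (\<lambda>_. 0)"
definition sscale :: "real \<Rightarrow> 'a ser \<Rightarrow> 'a ser" where
  "sscale c a = (\<lambda>m. c * a m)"

text \<open>Product of the monomial gamma with the series a.\<close>
definition mshift :: "'a mono \<Rightarrow> 'a ser \<Rightarrow> 'a ser" where
  "mshift \<gamma> a = (\<lambda>m. a (mdiv m \<gamma>))"

definition summable_fam :: "'i set \<Rightarrow> ('i \<Rightarrow> 'a::linorder ser) \<Rightarrow> bool" where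
  "summable_fam I f \<longleftrightarrow> antiwo mle (\<Union>i\<in>I. ssupp (f i)) \<and> (\<forall>m. finite {i\<in>I. f i m \<noteq> 0})"

definition fam_sum :: "'i set \<Rightarrow> ('i \<Rightarrow> 'a ser) \<Rightarrow> 'a ser" where
  "fam_sum I f = (\<lambda>m. \<Sum>i\<in>{i\<in>I. f i m \<noteq> 0}. f i m)"

text \<open>phi'/phi for a fundamental monomial phi.\<close>
definition fdl :: "('a ser \<Rightarrow> 'a ser) \<Rightarrow> 'a \<Rightarrow> 'a ser" where
  "fdl D \<phi> = mshift (minv (fund \<phi>)) (D (smon (fund \<phi>)))"

definition series_derivation :: "'a::linorder set \<Rightarrow> 'a mono set \<Rightarrow> ('a ser \<Rightarrow> 'a ser) \<Rightarrow> bool" where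
  "series_derivation Phi G D \<longleftrightarrow>
     (\<forall>a\<in>Kser G. D a \<in> Kser G) \<and>
     D sone = szero \<and>
     (\<forall>\<alpha>\<in>G. summable_fam (msupp \<alpha>) (\<lambda>\<phi>. sscale (\<alpha> \<phi>) (fdl D \<phi>)) \<and>
        D (smon \<alpha>) = mshift \<alpha> (fam_sum (msupp \<alpha>) (\<lambda>\<phi>. sscale (\<alpha> \<phi>) (fdl D \<phi>)))) \<and>
     (\<forall>a\<in>Kser G. summable_fam (ssupp a) (\<lambda>\<alpha>. sscale (a \<alpha>) (D (smon \<alpha>))) \<and>
        D a = fam_sum (ssupp a) (\<lambda>\<alpha>. sscale (a \<alpha>) (D (smon \<alpha>))))"

definition ser_le :: "'a::linorder ser \<Rightarrow> 'a ser \<Rightarrow> bool" where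
  "ser_le a b \<longleftrightarrow> mle (LM a) (LM b)"
definition ser_asymp :: "'a::linorder ser \<Rightarrow> 'a ser \<Rightarrow> bool" where
  "ser_asymp a b \<longleftrightarrow> LM a = LM b"

definition sabs :: "'a::linorder ser \<Rightarrow> 'a mono" where
  "sabs a = absm (LM a)"

text \<open>LM(a'/a) = LM(a') / LM(a) (leading monomials are multiplicative on K*).\<close>
definition LM_logder :: "('a::linorder ser \<Rightarrow> 'a ser) \<Rightarrow> 'a ser \<Rightarrow> 'a mono" where
  "LM_logder D a = mdiv (LM (D a)) (LM a)"

definition hardy_type :: "'a::linorder set \<Rightarrow> 'a mono set \<Rightarrow> ('a ser \<Rightarrow> 'a ser) \<Rightarrow> bool" where
  "hardy_type Phi G D \<longleftrightarrow>
     (\<forall>a\<in>Kser G. D a = szero \<longleftrightarrow> (\<exists>c. a = sscale c sone)) \<and>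
     (\<forall>a\<in>Kser G. \<forall>b\<in>Kser G. a \<noteq> szero \<longrightarrow> b \<noteq> szero \<longrightarrow>
        \<not> ser_asymp a sone \<longrightarrow> \<not> ser_asymp b sone \<longrightarrow>
        (ser_le a b \<longleftrightarrow> ser_le (D a) (D b))) \<and>
     (\<forall>a\<in>Kser G. \<forall>b\<in>Kser G. a \<noteq> szero \<longrightarrow> b \<noteq> szero \<longrightarrow>
        mless (sabs b) (sabs a) \<longrightarrow> mless mone (sabs b) \<longrightarrow>
        (mle (LM_logder D b) (LM_logder D a) \<and>
         (LM_logder D a = LM_logder D b \<longleftrightarrow> LF (sabs a) = LF (sabs b))))"

definition theta :: "('a::linorder ser \<Rightarrow> 'a ser) \<Rightarrow> 'a \<Rightarrow> 'a mono" where
  "theta D \<phi> = LM (fdl D \<phi>)"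

definition is_theta_hat :: "'a::linorder set \<Rightarrow> 'a mono set \<Rightarrow> ('a ser \<Rightarrow> 'a ser) \<Rightarrow> 'a mono \<Rightarrow> bool" where
  "is_theta_hat Phi G D t \<longleftrightarrow> t \<in> G \<and> (\<forall>\<phi>\<in>Phi. mle t (theta D \<phi>)) \<and>
     (\<forall>s\<in>G. (\<forall>\<phi>\<in>Phi. mle s (theta D \<phi>)) \<longrightarrow> mle s t)"

end

theory Submission
  imports Defs
begin

text \<open>By (HD3) the leading monomial of the logarithmic derivative of a monomial
  \<open>\<gamma> \<noteq> 1\<close> depends only on \<open>LF \<gamma>\<close>, so \<open>LM(\<gamma>') = \<gamma>\<theta>\<^sub>\<phi>\<close> for \<open>\<phi> = LF \<gamma>\<close>, and
  \<open>\<theta>\<close> is strictly increasing on \<open>\<Phi>\<close>. Together with (HD2) this shows that for \<open>\<phi> < \<psi>\<close>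
  the monomials \<open>\<theta>\<^sub>\<phi>\<close> and \<open>\<theta>\<^sub>\<psi>\<close> have the same exponents at every \<open>\<chi> \<succcurlyeq> \<psi>\<close>.
  Hence \<open>\<alpha>/\<theta>\<^sub>\<phi>\<close> and \<open>\<alpha>/\<theta>\<^sub>\<psi>\<close> agree from \<open>\<psi>\<close> upwards, which excludes two
  solutions \<open>\<phi> < \<psi>\<close>. If there is no solution at all, no \<open>\<alpha>/\<theta>\<^sub>\<phi>\<close> has an exponent at
  or above \<open>\<phi>\<close>, and comparing the signs of leading exponents shows that \<open>\<alpha>\<close> is the
  greatest lower bound \<open>\<hat>\<theta>\<close> of the \<open>\<theta>\<^sub>\<phi>\<close>.\<close>

lemma mmul_apply [simp]: "mmul \<gamma> \<delta> x = \<gamma> x + \<delta> x"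
  by (simp add: mmul_def)

lemma minv_apply [simp]: "minv \<gamma> x = - \<gamma> x"
  by (simp add: minv_def)

lemma mdiv_apply [simp]: "mdiv \<gamma> \<delta> x = \<gamma> x - \<delta> x"
  by (simp add: mdiv_def)

lemma mone_apply [simp]: "mone x = 0"
  by (simp add: mone_def)

lemma mdiv_mone [simp]: "mdiv \<gamma> mone = \<gamma>"
  by (simp add: fun_eq_iff)

lemma mdiv_commute_minv: "mdiv \<gamma> \<delta> = minv (mdiv \<delta> \<gamma>)"
  by (simp add: fun_eq_iff)

definition is_maxsupp :: "'a::linorder mono \<Rightarrow> 'a \<Rightarrow> bool" where
  "is_maxsupp \<gamma> x \<longleftrightarrow> \<gamma> x \<noteq> 0 \<and> (\<forall>y>x. \<gamma> y = 0)"

lemma is_maxsupp_le: "is_maxsupp \<gamma> x \<Longrightarrow> \<gamma> y \<noteq> 0 \<Longrightarrow> y \<le> x"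
  unfolding is_maxsupp_def by (metis not_le)

lemma maxsupp_eqI: "is_maxsupp \<gamma> x \<Longrightarrow> maxsupp \<gamma> = x"
  unfolding maxsupp_def by (rule Greatest_equality) (auto simp: is_maxsupp_def is_maxsupp_le)

lemma is_maxsupp_neq_mone: "is_maxsupp \<gamma> x \<Longrightarrow> \<gamma> \<noteq> mone"
  unfolding is_maxsupp_def by auto

lemma is_maxsupp_minv [simp]: "is_maxsupp (minv \<gamma>) x \<longleftrightarrow> is_maxsupp \<gamma> x"
  unfolding is_maxsupp_def by simp

lemma is_maxsupp_mmul_vanishing:
  assumes "is_maxsupp \<gamma> x" and "\<And>y. x \<le> y \<Longrightarrow> \<delta> y = 0"
  shows "is_maxsupp (mmul \<gamma> \<delta>) x"
  using assms unfolding is_maxsupp_def by auto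

lemma hahn_is_maxsupp:
  assumes "\<gamma> \<in> hahn Phi" and "\<gamma> \<noteq> mone"
  shows "is_maxsupp \<gamma> (maxsupp \<gamma>)" and "maxsupp \<gamma> \<in> Phi"
proof -
  have "msupp \<gamma> \<noteq> {}"
    using assms(2) unfolding msupp_def by (auto simp: fun_eq_iff)
  then obtain m where m: "m \<in> msupp \<gamma>" "\<forall>t\<in>msupp \<gamma>. t \<le> m"
    using assms(1) unfolding hahn_def antiwo_def by blast
  then have "is_maxsupp \<gamma> m"
    unfolding is_maxsupp_def msupp_def by (auto simp: not_le[symmetric])
  with m assms(1) show "is_maxsupp \<gamma> (maxsupp \<gamma>)" and "maxsupp \<gamma> \<in> Phi"
    by (auto simp: maxsupp_eqI hahn_def)
qed

lemma LF_eq_fund_iff: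
  assumes "\<gamma> \<in> hahn Phi"
  shows "LF \<gamma> = fund x \<longleftrightarrow> is_maxsupp \<gamma> x"
proof
  assume LF: "LF \<gamma> = fund x"
  have "fund x \<noteq> mone"
    by (auto simp: fund_def fun_eq_iff)
  with LF have "\<gamma> \<noteq> mone" and "fund (maxsupp \<gamma>) = fund x"
    unfolding LF_def by (auto split: if_splits)
  then show "is_maxsupp \<gamma> x"
    using hahn_is_maxsupp[OF assms] by (metis fund_def zero_neq_one)
qed (simp add: LF_def maxsupp_eqI is_maxsupp_neq_mone)

lemma mpos_iff_is_maxsupp: "is_maxsupp \<gamma> x \<Longrightarrow> mpos \<gamma> \<longleftrightarrow> 0 < \<gamma> x"
  unfolding mpos_def by (simp add: maxsupp_eqI is_maxsupp_neq_mone)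

lemma mpos_hahn_is_maxsupp:
  assumes "\<gamma> \<in> hahn Phi" and "mpos \<gamma>"
  obtains c where "is_maxsupp \<gamma> c" and "0 < \<gamma> c" and "c \<in> Phi"
  using assms hahn_is_maxsupp mpos_iff_is_maxsupp unfolding mpos_def by metis

lemma not_mpos_mone: "\<not> mpos mone"
  unfolding mpos_def by simp

lemma not_mpos_minv: "mpos \<gamma> \<Longrightarrow> \<not> mpos (minv \<gamma>)"
  unfolding mpos_def maxsupp_def by simp

lemma mless_mone_iff [simp]: "mless mone \<gamma> \<longleftrightarrow> mpos \<gamma>"
  by (simp add: mless_def)

lemma mle_not_mless: "mle \<gamma> \<delta> \<Longrightarrow> \<not> mless \<delta> \<gamma>"
  unfolding mle_def mless_def
  by (metis mdiv_commute_minv not_mpos_minv not_mpos_mone diff_self mdiv_apply mone_def)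

lemma mle_antisym: "mle \<gamma> \<delta> \<Longrightarrow> mle \<delta> \<gamma> \<Longrightarrow> \<gamma> = \<delta>"
  using mle_not_mless unfolding mle_def by blast

lemma mle_mmul_right_cancel: "mle (mmul \<gamma> \<epsilon>) (mmul \<delta> \<epsilon>) \<longleftrightarrow> mle \<gamma> \<delta>"
proof -
  have "mdiv (mmul \<delta> \<epsilon>) (mmul \<gamma> \<epsilon>) = mdiv \<delta> \<gamma>" and "mmul \<gamma> \<epsilon> = mmul \<delta> \<epsilon> \<longleftrightarrow> \<gamma> = \<delta>"
    by (auto simp: fun_eq_iff)
  then show ?thesis
    unfolding mle_def mless_def by simp
qed

lemma is_maxsupp_fund: "is_maxsupp (fund x) x"
  unfolding is_maxsupp_def fund_def by auto

lemma fund_neq_mone: "fund x \<noteq> mone"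
  by (auto simp: fund_def fun_eq_iff)

lemma mpos_fund: "mpos (fund x)"
  using mpos_iff_is_maxsupp[OF is_maxsupp_fund] by (simp add: fund_def)

lemma LF_fund: "LF (fund x) = fund x"
  by (simp add: LF_def fund_neq_mone maxsupp_eqI[OF is_maxsupp_fund])

lemma fund_inject: "fund x = fund y \<longleftrightarrow> x = y"
  unfolding fund_def by (metis zero_neq_one)

lemma mless_fund: "x < y \<Longrightarrow> mless (fund x) (fund y)"
proof -
  assume "x < y"
  then have "is_maxsupp (mdiv (fund y) (fund x)) y" and "0 < mdiv (fund y) (fund x) y"
    unfolding is_maxsupp_def fund_def by auto
  then show "mless (fund x) (fund y)"
    unfolding mless_def by (simp add: mpos_iff_is_maxsupp)
qed

lemma absm_cases: "absm \<gamma> = \<gamma> \<or> absm \<gamma> = minv \<gamma>"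
  unfolding absm_def by simp

lemma absm_eq_self: "mpos \<gamma> \<Longrightarrow> absm \<gamma> = \<gamma>"
  unfolding absm_def mle_def by simp

lemma mpos_absm:
  assumes "\<gamma> \<in> hahn Phi" and "\<gamma> \<noteq> mone"
  shows "mpos (absm \<gamma>)"
proof -
  have top: "is_maxsupp \<gamma> (maxsupp \<gamma>)"
    using hahn_is_maxsupp[OF assms] by blast
  show ?thesis
  proof (cases "mpos \<gamma>")
    case False
    with assms(2) have "absm \<gamma> = minv \<gamma>"
      unfolding absm_def mle_def by auto
    moreover have "\<gamma> (maxsupp \<gamma>) \<noteq> 0"
      using top unfolding is_maxsupp_def by blast
    ultimately show ?thesis
      using False top by (simp add: mpos_iff_is_maxsupp)
  qed (simp add: absm_eq_self)
qed

lemma LM_eqI: "a m \<noteq> 0 \<Longrightarrow> (\<And>n. a n \<noteq> 0 \<Longrightarrow> mle n m) \<Longrightarrow> LM a = m"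
  unfolding LM_def by (rule the_equality) (auto intro: mle_antisym)

lemma LM_smon: "LM (smon \<gamma>) = \<gamma>"
  by (rule LM_eqI) (auto simp: smon_def mle_def split: if_splits)

lemma LM_mshift_minv:
  assumes "a m \<noteq> 0" and "\<And>n. a n \<noteq> 0 \<Longrightarrow> mle n m"
  shows "LM (mshift (minv \<gamma>) a) = mdiv m \<gamma>"
proof (rule LM_eqI)
  have "mdiv (mdiv m \<gamma>) (minv \<gamma>) = m"
    by (simp add: fun_eq_iff)
  with assms(1) show "mshift (minv \<gamma>) a (mdiv m \<gamma>) \<noteq> 0"
    by (simp add: mshift_def)
next
  fix n assume "mshift (minv \<gamma>) a n \<noteq> 0"
  then have "mle (mdiv n (minv \<gamma>)) m"
    using assms(2) by (simp add: mshift_def)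
  moreover have "mdiv n (minv \<gamma>) = mmul n \<gamma>" and "m = mmul (mdiv m \<gamma>) \<gamma>"
    by (simp_all add: fun_eq_iff)
  ultimately show "mle n (mdiv m \<gamma>)"
    using mle_mmul_right_cancel by metis
qed

locale hardy_derivation =
  fixes Phi :: "'a::linorder set" and G :: "'a mono set" and D :: "'a ser \<Rightarrow> 'a ser"
  assumes value_group: "value_group Phi G"
    and series_derivation: "series_derivation Phi G D"
    and hardy_type: "hardy_type Phi G D"
begin

lemma G_hahn: "\<gamma> \<in> G \<Longrightarrow> \<gamma> \<in> hahn Phi"
  using value_group unfolding value_group_def by auto

lemma G_mmul: "\<gamma> \<in> G \<Longrightarrow> \<delta> \<in> G \<Longrightarrow> mmul \<gamma> \<delta> \<in> G"
  using value_group unfolding value_group_def by auto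

lemma G_minv: "\<gamma> \<in> G \<Longrightarrow> minv \<gamma> \<in> G"
  using value_group unfolding value_group_def by auto

lemma G_mdiv: "\<gamma> \<in> G \<Longrightarrow> \<delta> \<in> G \<Longrightarrow> mdiv \<gamma> \<delta> \<in> G"
  unfolding mdiv_def by (simp add: G_mmul G_minv)

lemma G_fund: "x \<in> Phi \<Longrightarrow> fund x \<in> G"
  using value_group unfolding value_group_def by auto

lemma G_absm: "\<gamma> \<in> G \<Longrightarrow> absm \<gamma> \<in> G"
  using absm_cases[of \<gamma>] G_minv by metis

lemma mle_or_mless:
  assumes "\<gamma> \<in> G" and "\<delta> \<in> G"
  shows "mle \<gamma> \<delta> \<or> mless \<delta> \<gamma>"
proof (cases "mdiv \<delta> \<gamma> = mone")
  case True
  then have "\<gamma> = \<delta>"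
    by (auto simp: fun_eq_iff dest: fun_cong)
  then show ?thesis
    by (simp add: mle_def)
next
  case False
  then have top: "is_maxsupp (mdiv \<delta> \<gamma>) (maxsupp (mdiv \<delta> \<gamma>))"
    using hahn_is_maxsupp G_hahn G_mdiv assms by blast
  have "mdiv \<delta> \<gamma> (maxsupp (mdiv \<delta> \<gamma>)) \<noteq> 0"
    using top unfolding is_maxsupp_def by blast
  then have "mpos (mdiv \<delta> \<gamma>) \<or> mpos (minv (mdiv \<delta> \<gamma>))"
    using mpos_iff_is_maxsupp[OF top] mpos_iff_is_maxsupp[of "minv (mdiv \<delta> \<gamma>)"] top
    by force
  then show ?thesis
    unfolding mle_def mless_def mdiv_commute_minv[of \<gamma> \<delta>] by blast
qed

lemma smon_in_Kser: "\<gamma> \<in> G \<Longrightarrow> smon \<gamma> \<in> Kser G"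
proof -
  assume "\<gamma> \<in> G"
  moreover have "ssupp (smon \<gamma>) = {\<gamma>}"
    by (auto simp: ssupp_def smon_def)
  moreover have "antiwo mle {\<gamma>}"
    unfolding antiwo_def mle_def by (auto dest: subset_singletonD)
  ultimately show ?thesis
    unfolding Kser_def by auto
qed

lemma smon_neq_szero: "smon \<gamma> \<noteq> szero"
  by (auto simp: smon_def szero_def fun_eq_iff)

lemma LM_Kser:
  assumes "a \<in> Kser G" and "a \<noteq> szero"
  shows "a (LM a) \<noteq> 0" and "\<And>n. a n \<noteq> 0 \<Longrightarrow> mle n (LM a)" and "LM a \<in> G"
proof -
  have "ssupp a \<noteq> {}"
    using assms(2) by (auto simp: ssupp_def szero_def fun_eq_iff)
  moreover have "antiwo mle (ssupp a)" and "ssupp a \<subseteq> G"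
    using assms(1) unfolding Kser_def by blast+
  ultimately obtain m where m: "m \<in> ssupp a" "\<forall>t\<in>ssupp a. mle t m" "m \<in> G"
    unfolding antiwo_def by blast
  then have "LM a = m"
    by (intro LM_eqI) (auto simp: ssupp_def)
  with m show "a (LM a) \<noteq> 0" and "\<And>n. a n \<noteq> 0 \<Longrightarrow> mle n (LM a)" and "LM a \<in> G"
    by (auto simp: ssupp_def)
qed

lemma D_smon_in_Kser: "\<gamma> \<in> G \<Longrightarrow> D (smon \<gamma>) \<in> Kser G"
  using series_derivation smon_in_Kser unfolding series_derivation_def by (elim conjE) blast

lemma D_smon_neq_szero:
  assumes "\<gamma> \<in> G" and "\<gamma> \<noteq> mone"
  shows "D (smon \<gamma>) \<noteq> szero"
proof
  have HD1: "\<forall>a\<in>Kser G. D a = szero \<longleftrightarrow> (\<exists>c. a = sscale c sone)"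
    using hardy_type unfolding hardy_type_def by (elim conjE)
  assume "D (smon \<gamma>) = szero"
  then obtain c where "smon \<gamma> = sscale c sone"
    using HD1 smon_in_Kser[OF assms(1)] by blast
  then have "smon \<gamma> \<gamma> = sscale c sone \<gamma>"
    by simp
  with assms(2) show False
    by (simp add: smon_def sscale_def sone_def)
qed

definition LM_der :: "'a mono \<Rightarrow> 'a mono" where
  "LM_der \<gamma> = LM (D (smon \<gamma>))"

lemma LM_der_in_G: "\<gamma> \<in> G \<Longrightarrow> \<gamma> \<noteq> mone \<Longrightarrow> LM_der \<gamma> \<in> G"
  unfolding LM_der_def by (rule LM_Kser(3)[OF D_smon_in_Kser D_smon_neq_szero])

lemma theta_eq_LM_der: "x \<in> Phi \<Longrightarrow> theta D x = mdiv (LM_der (fund x)) (fund x)"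
  unfolding theta_def fdl_def LM_der_def
  by (intro LM_mshift_minv LM_Kser[OF D_smon_in_Kser D_smon_neq_szero] G_fund fund_neq_mone)

lemma theta_in_G: "x \<in> Phi \<Longrightarrow> theta D x \<in> G"
  by (simp add: theta_eq_LM_der G_mdiv LM_der_in_G G_fund fund_neq_mone)

lemma mle_iff_LM_der_mle:
  assumes "\<gamma> \<in> G" and "\<delta> \<in> G" and "\<gamma> \<noteq> mone" and "\<delta> \<noteq> mone"
  shows "mle \<gamma> \<delta> \<longleftrightarrow> mle (LM_der \<gamma>) (LM_der \<delta>)"
proof -
  have "LM sone = mone"
    unfolding sone_def by (rule LM_smon)
  with assms(3,4) have "\<not> ser_asymp (smon \<gamma>) sone" and "\<not> ser_asymp (smon \<delta>) sone"
    unfolding ser_asymp_def LM_smon by auto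
  moreover have HD2: "\<forall>a\<in>Kser G. \<forall>b\<in>Kser G. a \<noteq> szero \<longrightarrow> b \<noteq> szero \<longrightarrow>
      \<not> ser_asymp a sone \<longrightarrow> \<not> ser_asymp b sone \<longrightarrow> (ser_le a b \<longleftrightarrow> ser_le (D a) (D b))"
    using hardy_type unfolding hardy_type_def by (elim conjE)
  ultimately show ?thesis
    using HD2[rule_format, OF smon_in_Kser[OF assms(1)] smon_in_Kser[OF assms(2)]
        smon_neq_szero smon_neq_szero]
    unfolding ser_le_def LM_smon LM_der_def by blast
qed

lemma logder_mle_and_eq_iff:
  assumes "\<gamma> \<in> G" and "\<delta> \<in> G" and "mless (absm \<delta>) (absm \<gamma>)" and "mpos (absm \<delta>)"
  shows "mle (mdiv (LM_der \<delta>) \<delta>) (mdiv (LM_der \<gamma>) \<gamma>)"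
    and "mdiv (LM_der \<gamma>) \<gamma> = mdiv (LM_der \<delta>) \<delta> \<longleftrightarrow> LF (absm \<gamma>) = LF (absm \<delta>)"
proof -
  have HD3: "\<forall>a\<in>Kser G. \<forall>b\<in>Kser G. a \<noteq> szero \<longrightarrow> b \<noteq> szero \<longrightarrow>
      mless (sabs b) (sabs a) \<longrightarrow> mless mone (sabs b) \<longrightarrow>
      (mle (LM_logder D b) (LM_logder D a) \<and>
       (LM_logder D a = LM_logder D b \<longleftrightarrow> LF (sabs a) = LF (sabs b)))"
    using hardy_type unfolding hardy_type_def by (elim conjE)
  have "mless (sabs (smon \<delta>)) (sabs (smon \<gamma>))" and "mless mone (sabs (smon \<delta>))"
    using assms(3,4) by (simp_all add: sabs_def LM_smon)
  from HD3[rule_format, OF smon_in_Kser[OF assms(1)] smon_in_Kser[OF assms(2)]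
      smon_neq_szero smon_neq_szero this]
  show "mle (mdiv (LM_der \<delta>) \<delta>) (mdiv (LM_der \<gamma>) \<gamma>)"
    and "mdiv (LM_der \<gamma>) \<gamma> = mdiv (LM_der \<delta>) \<delta> \<longleftrightarrow> LF (absm \<gamma>) = LF (absm \<delta>)"
    unfolding sabs_def LM_smon LM_logder_def LM_der_def by blast+
qed

lemma is_maxsupp_absm:
  assumes "\<gamma> \<in> G" and "\<gamma> \<noteq> mone"
  shows "is_maxsupp (absm \<gamma>) (maxsupp \<gamma>)" and "0 < absm \<gamma> (maxsupp \<gamma>)"
proof -
  show top: "is_maxsupp (absm \<gamma>) (maxsupp \<gamma>)"
    using absm_cases[of \<gamma>] hahn_is_maxsupp(1)[OF G_hahn[OF assms(1)] assms(2)]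
    by (metis is_maxsupp_minv)
  show "0 < absm \<gamma> (maxsupp \<gamma>)"
    using mpos_absm[OF G_hahn[OF assms(1)] assms(2)] mpos_iff_is_maxsupp[OF top] by blast
qed

text \<open>Both logarithmic derivatives are compared by (HD3) with that of \<open>|\<gamma>||\<delta>|\<close>, which
  dominates \<open>|\<gamma>|\<close> and \<open>|\<delta>|\<close> and has the same leading fundamental monomial.\<close>
lemma logder_eq_of_maxsupp_eq:
  assumes "\<gamma> \<in> G" and "\<gamma> \<noteq> mone" and "\<delta> \<in> G" and "\<delta> \<noteq> mone"
    and "maxsupp \<gamma> = maxsupp \<delta>"
  shows "mdiv (LM_der \<gamma>) \<gamma> = mdiv (LM_der \<delta>) \<delta>"
proof -
  define t where "t = maxsupp \<gamma>"
  define \<zeta> where "\<zeta> = mmul (absm \<gamma>) (absm \<delta>)"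
  note \<gamma>_top = is_maxsupp_absm[OF assms(1,2), folded t_def]
  note \<delta>_top = is_maxsupp_absm[OF assms(3,4), folded assms(5), folded t_def]
  have \<zeta>_top: "is_maxsupp \<zeta> t" and "0 < \<zeta> t"
    using \<gamma>_top \<delta>_top unfolding \<zeta>_def is_maxsupp_def by auto
  then have "mpos \<zeta>"
    by (simp add: mpos_iff_is_maxsupp)
  then have abs_\<zeta>: "absm \<zeta> = \<zeta>"
    by (rule absm_eq_self)
  have \<zeta>_G: "\<zeta> \<in> G"
    unfolding \<zeta>_def by (simp add: G_mmul G_absm assms(1,3))
  have \<gamma>_pos: "mpos (absm \<gamma>)" and \<delta>_pos: "mpos (absm \<delta>)"
    using mpos_absm G_hahn assms(1-4) by blast+
  have "mdiv \<zeta> (absm \<gamma>) = absm \<delta>" and "mdiv \<zeta> (absm \<delta>) = absm \<gamma>"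
    unfolding \<zeta>_def by (auto simp: fun_eq_iff)
  then have "mless (absm \<gamma>) (absm \<zeta>)" and "mless (absm \<delta>) (absm \<zeta>)"
    unfolding abs_\<zeta> mless_def using \<gamma>_pos \<delta>_pos by simp_all
  moreover have "LF (absm \<zeta>) = fund t" and "LF (absm \<gamma>) = fund t" and "LF (absm \<delta>) = fund t"
    using \<zeta>_top \<gamma>_top \<delta>_top abs_\<zeta> by (simp_all add: LF_def maxsupp_eqI is_maxsupp_neq_mone)
  ultimately have "mdiv (LM_der \<zeta>) \<zeta> = mdiv (LM_der \<gamma>) \<gamma>" and "mdiv (LM_der \<zeta>) \<zeta> = mdiv (LM_der \<delta>) \<delta>"
    using logder_mle_and_eq_iff(2)[OF \<zeta>_G assms(1) _ \<gamma>_pos]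
      logder_mle_and_eq_iff(2)[OF \<zeta>_G assms(3) _ \<delta>_pos] by simp_all
  then show ?thesis
    by simp
qed

lemma LM_der_eq:
  assumes "\<gamma> \<in> G" and "\<gamma> \<noteq> mone"
  shows "LM_der \<gamma> = mmul \<gamma> (theta D (maxsupp \<gamma>))"
proof -
  have t: "maxsupp \<gamma> \<in> Phi"
    using hahn_is_maxsupp(2)[OF G_hahn[OF assms(1)] assms(2)] .
  have "mdiv (LM_der \<gamma>) \<gamma> = theta D (maxsupp \<gamma>)"
    using logder_eq_of_maxsupp_eq[OF assms G_fund[OF t] fund_neq_mone]
    by (simp add: maxsupp_eqI[OF is_maxsupp_fund] theta_eq_LM_der[OF t])
  then show ?thesis
    by (intro ext) (auto simp: fun_eq_iff algebra_simps)
qed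

lemma theta_strict_mono:
  assumes "x \<in> Phi" and "y \<in> Phi" and "x < y"
  shows "mless (theta D x) (theta D y)"
proof -
  have "mle (theta D x) (theta D y)" and "theta D y = theta D x \<longleftrightarrow> fund y = fund x"
    using logder_mle_and_eq_iff[OF G_fund[OF assms(2)] G_fund[OF assms(1)]]
      mless_fund[OF assms(3)] mpos_fund
    by (simp_all add: absm_eq_self mpos_fund LF_fund theta_eq_LM_der assms(1,2))
  with assms(3) show ?thesis
    unfolding mle_def fund_inject by auto
qed

text \<open>If \<open>\<theta>\<^sub>y/\<theta>\<^sub>x\<close> had a leading fundamental monomial \<open>t \<succcurlyeq> y\<close>, then
  \<open>\<gamma> = x\<theta>\<^sub>x/\<theta>\<^sub>y\<close> would satisfy \<open>LF \<gamma> = t\<close> and \<open>LM(\<gamma>') = \<gamma>\<theta>\<^sub>t \<succcurlyeq> \<gamma>\<theta>\<^sub>y = LM(x')\<close>,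
  so \<open>\<gamma> \<succcurlyeq> x\<close> by (HD2), contradicting \<open>\<theta>\<^sub>x \<prec> \<theta>\<^sub>y\<close>.\<close>
lemma theta_agree_above:
  assumes x: "x \<in> Phi" and y: "y \<in> Phi" and "x < y" and "y \<le> z"
  shows "theta D y z = theta D x z"
proof (rule ccontr)
  define \<rho> where "\<rho> = mdiv (theta D y) (theta D x)"
  assume "theta D y z \<noteq> theta D x z"
  then have "\<rho> z \<noteq> 0"
    unfolding \<rho>_def by simp
  have \<rho>_G: "\<rho> \<in> G"
    unfolding \<rho>_def by (simp add: G_mdiv theta_in_G x y)
  define t where "t = maxsupp \<rho>"
  have "\<rho> \<noteq> mone"
    using \<open>\<rho> z \<noteq> 0\<close> by auto
  then have \<rho>_top: "is_maxsupp \<rho> t" and t: "t \<in> Phi"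
    using hahn_is_maxsupp[OF G_hahn[OF \<rho>_G]] unfolding t_def by auto
  have "y \<le> t"
    using is_maxsupp_le[OF \<rho>_top \<open>\<rho> z \<noteq> 0\<close>] \<open>y \<le> z\<close> by simp
  define \<gamma> where "\<gamma> = mmul (minv \<rho>) (fund x)"
  have \<gamma>_G: "\<gamma> \<in> G"
    unfolding \<gamma>_def by (simp add: G_mmul G_minv G_fund \<rho>_G x)
  have "is_maxsupp \<gamma> t"
    unfolding \<gamma>_def using \<rho>_top \<open>x < y\<close> \<open>y \<le> t\<close>
    by (intro is_maxsupp_mmul_vanishing) (auto simp: fund_def)
  then have \<gamma>_ne: "\<gamma> \<noteq> mone" and "maxsupp \<gamma> = t"
    by (simp_all add: is_maxsupp_neq_mone maxsupp_eqI)
  have "mle (theta D y) (theta D t)"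
    using theta_strict_mono[OF y t] \<open>y \<le> t\<close> by (cases "y = t") (auto simp: mle_def)
  then have "mle (mmul (theta D y) \<gamma>) (mmul (theta D t) \<gamma>)"
    by (simp add: mle_mmul_right_cancel)
  moreover have "mmul (theta D y) \<gamma> = LM_der (fund x)"
    using LM_der_eq[OF G_fund[OF x] fund_neq_mone]
    by (simp add: \<gamma>_def \<rho>_def maxsupp_eqI[OF is_maxsupp_fund] fun_eq_iff)
  moreover have "mmul (theta D t) \<gamma> = LM_der \<gamma>"
    using LM_der_eq[OF \<gamma>_G \<gamma>_ne] \<open>maxsupp \<gamma> = t\<close> by (simp add: fun_eq_iff)
  ultimately have "mle (fund x) \<gamma>"
    using mle_iff_LM_der_mle[OF G_fund[OF x] \<gamma>_G fund_neq_mone \<gamma>_ne] by simp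
  moreover have "mdiv (fund x) \<gamma> = \<rho>"
    unfolding \<gamma>_def by (simp add: fun_eq_iff)
  then have "mless \<gamma> (fund x)"
    using theta_strict_mono[OF x y \<open>x < y\<close>] unfolding mless_def \<rho>_def by simp
  ultimately show False
    using mle_not_mless by blast
qed

lemma quotients_agree_above:
  assumes "x \<in> Phi" and "y \<in> Phi" and "x < y" and "y \<le> z"
  shows "mdiv \<alpha> (theta D x) z = mdiv \<alpha> (theta D y) z"
  using theta_agree_above[OF assms] by simp

lemma solution_unique:
  assumes "x \<in> Phi" and "is_maxsupp (mdiv \<alpha> (theta D x)) x"
    and "y \<in> Phi" and "is_maxsupp (mdiv \<alpha> (theta D y)) y"
  shows "x = y"
proof -
  have False if "x \<in> Phi" "is_maxsupp (mdiv \<alpha> (theta D x)) x"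
      "y \<in> Phi" "is_maxsupp (mdiv \<alpha> (theta D y)) y" "x < y" for x y
    using that quotients_agree_above[OF that(1,3,5) order_refl, of \<alpha>]
    unfolding is_maxsupp_def by auto
  with assms show ?thesis
    by (metis neq_iff)
qed

lemma quotient_vanishes_above_if_no_solution:
  assumes \<alpha>: "\<alpha> \<in> G" and none: "\<forall>y\<in>Phi. \<not> is_maxsupp (mdiv \<alpha> (theta D y)) y"
    and x: "x \<in> Phi" and "x \<le> z"
  shows "mdiv \<alpha> (theta D x) z = 0"
proof (rule ccontr)
  assume nz: "mdiv \<alpha> (theta D x) z \<noteq> 0"
  define u where "u = maxsupp (mdiv \<alpha> (theta D x))"
  have "mdiv \<alpha> (theta D x) \<in> G"
    by (simp add: G_mdiv \<alpha> theta_in_G x)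
  then have top: "is_maxsupp (mdiv \<alpha> (theta D x)) u" and u: "u \<in> Phi"
    using hahn_is_maxsupp G_hahn nz unfolding u_def by (metis mone_apply)+
  have "x < u"
    using is_maxsupp_le[OF top nz] \<open>x \<le> z\<close> top none x by (metis order.order_iff_strict order_trans)
  then have "is_maxsupp (mdiv \<alpha> (theta D u)) u"
    using top quotients_agree_above[OF x u \<open>x < u\<close>, of _ \<alpha>]
    unfolding is_maxsupp_def by (metis less_imp_le order_refl)
  with none u show False
    by blast
qed

text \<open>In both halves of the greatest-lower-bound property the leading fundamental monomial
  \<open>c\<close> of a positive quotient is also leading for a second quotient, with the opposite
  sign, because \<open>\<alpha>/\<theta>\<^sub>c\<close> has no exponents at or above \<open>c\<close>.\<close>
lemma mle_theta_if_no_solution: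
  assumes \<alpha>: "\<alpha> \<in> G" and none: "\<forall>y\<in>Phi. \<not> is_maxsupp (mdiv \<alpha> (theta D y)) y"
    and x: "x \<in> Phi"
  shows "mle \<alpha> (theta D x)"
proof (rule ccontr)
  note vanish = quotient_vanishes_above_if_no_solution[OF \<alpha> none]
  assume "\<not> mle \<alpha> (theta D x)"
  then have "mpos (mdiv \<alpha> (theta D x))"
    using mle_or_mless[OF \<alpha> theta_in_G[OF x]] unfolding mless_def by blast
  then obtain c where top: "is_maxsupp (mdiv \<alpha> (theta D x)) c"
    and pos: "0 < mdiv \<alpha> (theta D x) c" and c: "c \<in> Phi"
    using mpos_hahn_is_maxsupp G_hahn G_mdiv \<alpha> theta_in_G x by metis
  have "c < x"
    using vanish[OF x] top unfolding is_maxsupp_def by (metis not_le)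
  have "mdiv (theta D x) (theta D c) = mmul (minv (mdiv \<alpha> (theta D x))) (mdiv \<alpha> (theta D c))"
    by (simp add: fun_eq_iff)
  then have "is_maxsupp (mdiv (theta D x) (theta D c)) c"
    using top vanish[OF c] by (simp add: is_maxsupp_mmul_vanishing)
  then have "\<not> mpos (mdiv (theta D x) (theta D c))"
    using pos vanish[OF c order_refl] by (simp add: mpos_iff_is_maxsupp)
  then show False
    using theta_strict_mono[OF c x \<open>c < x\<close>] unfolding mless_def by blast
qed

lemma lower_bound_mle_if_no_solution:
  assumes \<alpha>: "\<alpha> \<in> G" and none: "\<forall>y\<in>Phi. \<not> is_maxsupp (mdiv \<alpha> (theta D y)) y"
    and \<sigma>: "\<sigma> \<in> G" and lower: "\<forall>x\<in>Phi. mle \<sigma> (theta D x)"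
  shows "mle \<sigma> \<alpha>"
proof (rule ccontr)
  note vanish = quotient_vanishes_above_if_no_solution[OF \<alpha> none]
  assume "\<not> mle \<sigma> \<alpha>"
  then have "mpos (mdiv \<sigma> \<alpha>)"
    using mle_or_mless[OF \<sigma> \<alpha>] unfolding mless_def by blast
  then obtain c where top: "is_maxsupp (mdiv \<sigma> \<alpha>) c"
    and pos: "0 < mdiv \<sigma> \<alpha> c" and c: "c \<in> Phi"
    using mpos_hahn_is_maxsupp G_hahn G_mdiv \<alpha> \<sigma> by metis
  have "mdiv (theta D c) \<sigma> = mmul (minv (mdiv \<sigma> \<alpha>)) (minv (mdiv \<alpha> (theta D c)))"
    by (simp add: fun_eq_iff)
  then have top': "is_maxsupp (mdiv (theta D c) \<sigma>) c"
    using top vanish[OF c] by (simp add: is_maxsupp_mmul_vanishing)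
  then have "\<not> mpos (mdiv (theta D c) \<sigma>)"
    using pos vanish[OF c order_refl] by (simp add: mpos_iff_is_maxsupp)
  moreover have "theta D c \<noteq> \<sigma>"
    using is_maxsupp_neq_mone[OF top'] by (auto simp: fun_eq_iff)
  ultimately show False
    using lower c unfolding mle_def mless_def by auto
qed

lemma theta_hat_if_no_solution:
  assumes "\<alpha> \<in> G" and "\<forall>y\<in>Phi. \<not> is_maxsupp (mdiv \<alpha> (theta D y)) y"
  shows "is_theta_hat Phi G D \<alpha>"
  unfolding is_theta_hat_def
  using assms mle_theta_if_no_solution lower_bound_mle_if_no_solution by blast

end

theorem mainTheorem4:
  fixes Phi :: "'a::linorder set" and G :: "'a mono set"
    and D :: "'a ser \<Rightarrow> 'a ser" and \<alpha> :: "'a mono"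
  assumes "value_group Phi G"
    and "series_derivation Phi G D"
    and "hardy_type Phi G D"
    and "\<alpha> \<in> G"
    and "\<forall>t. is_theta_hat Phi G D t \<longrightarrow> \<alpha> \<noteq> t"
  shows "\<exists>!\<psi>. \<psi> \<in> Phi \<and> LF (mdiv \<alpha> (theta D \<psi>)) = fund \<psi>"
proof -
  interpret hardy_derivation Phi G D
    using assms(1-3) by unfold_locales
  have iff: "LF (mdiv \<alpha> (theta D x)) = fund x \<longleftrightarrow> is_maxsupp (mdiv \<alpha> (theta D x)) x"
    if "x \<in> Phi" for x
    using LF_eq_fund_iff G_hahn G_mdiv assms(4) theta_in_G that by blast
  obtain \<psi> where "\<psi> \<in> Phi" and "is_maxsupp (mdiv \<alpha> (theta D \<psi>)) \<psi>"
    using theta_hat_if_no_solution[OF assms(4)] assms(5) by blast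
  then show ?thesis
    using iff solution_unique by (intro ex1I[of _ \<psi>]) blast+
qed

end
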